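(* Let $\mathcal{L}$ be the generator of a trace preserving quantum dynamical semigroup on $\mathfrak{T}(\mathcal{H})$ which is in generalized standard form with operators $M$ and $L_k$. Define, for $\phi,\psi\in\mathcal{D}(M)$, $\mathcal{M}(|\phi\rangle\langle\psi|)=|M\phi\rangle\langle\psi|+|\phi\rangle\langle M\psi|$ and $\mathcal{L}_+(|\phi\rangle\langle\psi|)=\mathcal{L}(|\phi\rangle\langle\psi|)+\mathcal{M}(|\phi\rangle\langle\psi|)$. Let $\phi,\psi,e,f\in\mathcal{D}(M)$ and $\varepsilon\ge0$ with $\|\phi-e\|,\|M\phi-Me\|,\|\psi-f\|,\|M\psi-Mf\|\le\varepsilon$. Then $$\|\mathcal{M}(|\phi\rangle\langle\psi|)-\mathcal{M}(|e\rangle\langle f|)\|_1\le\varepsilon\,(\|\phi\|+\|M\phi\|+\|\psi\|+\|M\psi\|+2\varepsilon)$$ and $$\|\mathcal{L}_+(|\phi\rangle\langle\psi|)-\mathcal{L}_+(|e\rangle\langle f|)\|_1\le\varepsilon\,(\|\phi\|+\|M\phi\|+\|\psi\|+\|M\psi\|+2\varepsilon).$$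
   Context: $\mathcal{H}$ is a separable Hilbert space, $\mathfrak{T}(\mathcal{H})$ the trace class operators with trace norm $\|\cdot\|_1$. A trace preserving quantum dynamical semigroup is a strongly continuous semigroup of trace preserving completely positive maps on $\mathfrak{T}(\mathcal{H})$ with generator $\mathcal{L}(\rho)=\lim_{t\to0}\frac1t(\mathcal{T}^t(\rho)-\rho)$. Generalized standard form: there are a closed densely defined operator $M$ generating a semigroup on $\mathcal{H}$ and countably many linear operators $L_k$, each relatively bounded with respect to $M$, such that for all $\phi,\psi\in\mathcal{D}(M)$, $|\phi\rangle\langle\psi|\in\mathcal{D}(\mathcal{L})$ and $\mathcal{L}(|\phi\rangle\langle\psi|)=\sum_k|L_k\phi\rangle\langle L_k\psi|-|M\phi\rangle\langle\psi|-|\phi\rangle\langle M\psi|$; $\mathcal{D}(\mathcal{L})$ is the graph-norm closure ($\|\rho\|_1+\|\mathcal{L}\rho\|_1$) of the set $\mathcal{D}_0$ of finite sums of such $|\phi\rangle\langle\psi|$; and $\sum_k\|L_k\phi\|^2=\langle\phi|M\phi\rangle+\langle M\phi|\phi\rangle$ for all $\phi\in\mathcal{D}(M)$. *)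

theory Defs
  imports "HOL-Analysis.Analysis"
begin

text \<open>
  Model of the separable Hilbert space: H = l2(I) for a countable index type I
  (every separable Hilbert space is unitarily equivalent to such a space).
  Operators on H (in particular trace class operators) are represented by their
  matrices with respect to the canonical orthonormal basis:
  entry (i,j) of T is the inner product of e_i with T e_j.
\<close>

type_synonym 'i vec = "'i \<Rightarrow> complex"
type_synonym 'i mat = "'i \<Rightarrow> 'i \<Rightarrow> complex"

definition l2 :: "'i vec set" where
  "l2 = {x. (\<lambda>i. (cmod (x i))\<^sup>2) summable_on UNIV}"

definition l2_norm :: "'i vec \<Rightarrow> real" where
  "l2_norm x = sqrt (\<Sum>\<^sub>\<infinity>i. (cmod (x i))\<^sup>2)"

text \<open>Inner product, antilinear in the first argument (physics convention).\<close>
definition l2_inner :: "'i vec \<Rightarrow> 'i vec \<Rightarrow> complex" where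
  "l2_inner x y = (\<Sum>\<^sub>\<infinity>i. cnj (x i) * y i)"

definition vadd :: "'i vec \<Rightarrow> 'i vec \<Rightarrow> 'i vec" where
  "vadd x y = (\<lambda>i. x i + y i)"

definition vsub :: "'i vec \<Rightarrow> 'i vec \<Rightarrow> 'i vec" where
  "vsub x y = (\<lambda>i. x i - y i)"

definition vscale :: "complex \<Rightarrow> 'i vec \<Rightarrow> 'i vec" where
  "vscale c x = (\<lambda>i. c * x i)"

definition linear_on_l2 :: "'i vec set \<Rightarrow> ('i vec \<Rightarrow> 'i vec) \<Rightarrow> bool" where
  "linear_on_l2 D A \<longleftrightarrow>
     D \<subseteq> l2 \<and> (\<lambda>i. 0) \<in> D \<and>
     (\<forall>x\<in>D. \<forall>y\<in>D. vadd x y \<in> D) \<and> (\<forall>c. \<forall>x\<in>D. vscale c x \<in> D) \<and>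
     (\<forall>x\<in>D. A x \<in> l2) \<and>
     (\<forall>x\<in>D. \<forall>y\<in>D. A (vadd x y) = vadd (A x) (A y)) \<and>
     (\<forall>c. \<forall>x\<in>D. A (vscale c x) = vscale c (A x))"

definition bounded_op_l2 :: "('i vec \<Rightarrow> 'i vec) \<Rightarrow> bool" where
  "bounded_op_l2 A \<longleftrightarrow> linear_on_l2 l2 A \<and> (\<exists>C. \<forall>x\<in>l2. l2_norm (A x) \<le> C * l2_norm x)"

definition c0_semigroup_l2 :: "(real \<Rightarrow> 'i vec \<Rightarrow> 'i vec) \<Rightarrow> bool" where
  "c0_semigroup_l2 S \<longleftrightarrow>
     (\<forall>t\<ge>0. bounded_op_l2 (S t)) \<and>
     (\<forall>x\<in>l2. S 0 x = x) \<and>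
     (\<forall>s\<ge>0. \<forall>t\<ge>0. \<forall>x\<in>l2. S (s + t) x = S s (S t x)) \<and>
     (\<forall>x\<in>l2. ((\<lambda>t. l2_norm (vsub (S t x) x)) \<longlongrightarrow> 0) (at_right 0))"

definition semigroup_generator_l2 ::
  "(real \<Rightarrow> 'i vec \<Rightarrow> 'i vec) \<Rightarrow> 'i vec set \<Rightarrow> ('i vec \<Rightarrow> 'i vec) \<Rightarrow> bool" where
  "semigroup_generator_l2 S DG G \<longleftrightarrow>
     DG = {x\<in>l2. \<exists>y\<in>l2.
            ((\<lambda>t. l2_norm (vsub (vscale (1 / complex_of_real t) (vsub (S t x) x)) y))
               \<longlongrightarrow> 0) (at_right 0)} \<and>
     (\<forall>x\<in>DG. G x \<in> l2 \<and>
        ((\<lambda>t. l2_norm (vsub (vscale (1 / complex_of_real t) (vsub (S t x) x)) (G x)))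
           \<longlongrightarrow> 0) (at_right 0))"

text \<open>The rank one operator |a><b|, i.e. x maps to <b,x> a.\<close>
definition rank1 :: "'i vec \<Rightarrow> 'i vec \<Rightarrow> 'i mat" where
  "rank1 a b = (\<lambda>i j. a i * cnj (b j))"

definition madd :: "'i mat \<Rightarrow> 'i mat \<Rightarrow> 'i mat" where
  "madd A B = (\<lambda>i j. A i j + B i j)"

definition msub :: "'i mat \<Rightarrow> 'i mat \<Rightarrow> 'i mat" where
  "msub A B = (\<lambda>i j. A i j - B i j)"

definition mscale :: "complex \<Rightarrow> 'i mat \<Rightarrow> 'i mat" where
  "mscale c A = (\<lambda>i j. c * A i j)"

definition mzero :: "'i mat" where
  "mzero = (\<lambda>i j. 0)"

definition msum :: "(nat \<Rightarrow> 'i mat) \<Rightarrow> nat \<Rightarrow> 'i mat" where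
  "msum A n = (\<lambda>i j. \<Sum>k<n. A k i j)"

definition nuclear_rep :: "'i mat \<Rightarrow> (nat \<Rightarrow> 'i vec) \<Rightarrow> (nat \<Rightarrow> 'i vec) \<Rightarrow> bool" where
  "nuclear_rep T a b \<longleftrightarrow>
     (\<forall>n. a n \<in> l2 \<and> b n \<in> l2) \<and>
     summable (\<lambda>n. l2_norm (a n) * l2_norm (b n)) \<and>
     (\<forall>i j. (\<lambda>n. a n i * cnj (b n j)) sums T i j)"

definition trace_class :: "'i mat set" where
  "trace_class = {T. \<exists>a b. nuclear_rep T a b}"

text \<open>Trace norm (on a Hilbert space it coincides with the nuclear norm).\<close>
definition trace_norm :: "'i mat \<Rightarrow> real" where
  "trace_norm T = Inf {(\<Sum>n. l2_norm (a n) * l2_norm (b n)) | a b. nuclear_rep T a b}"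

definition mtrace :: "'i mat \<Rightarrow> complex" where
  "mtrace T = (\<Sum>\<^sub>\<infinity>i. T i i)"

definition qform :: "'i vec \<Rightarrow> 'i mat \<Rightarrow> 'i vec \<Rightarrow> complex" where
  "qform x T y = (\<Sum>\<^sub>\<infinity>i. cnj (x i) * (\<Sum>\<^sub>\<infinity>j. T i j * y j))"

text \<open>Positivity of the n x n block operator matrix [rho a b] of trace class operators,
  i.e. of an element of M_n(C) tensor T(H).\<close>
definition block_pos :: "nat \<Rightarrow> (nat \<Rightarrow> nat \<Rightarrow> 'i mat) \<Rightarrow> bool" where
  "block_pos n \<rho> \<longleftrightarrow>
     (\<forall>a<n. \<forall>b<n. \<rho> a b \<in> trace_class) \<and>
     (\<forall>x. (\<forall>a<n. x a \<in> l2) \<longrightarrow>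
        Im (\<Sum>a<n. \<Sum>b<n. qform (x a) (\<rho> a b) (x b)) = 0 \<and>
        0 \<le> Re (\<Sum>a<n. \<Sum>b<n. qform (x a) (\<rho> a b) (x b)))"

definition tc_bounded_linear :: "('i mat \<Rightarrow> 'i mat) \<Rightarrow> bool" where
  "tc_bounded_linear \<Phi> \<longleftrightarrow>
     (\<forall>\<rho>\<in>trace_class. \<Phi> \<rho> \<in> trace_class) \<and>
     (\<forall>\<rho>\<in>trace_class. \<forall>\<sigma>\<in>trace_class. \<Phi> (madd \<rho> \<sigma>) = madd (\<Phi> \<rho>) (\<Phi> \<sigma>)) \<and>
     (\<forall>c. \<forall>\<rho>\<in>trace_class. \<Phi> (mscale c \<rho>) = mscale c (\<Phi> \<rho>)) \<and>
     (\<exists>C. \<forall>\<rho>\<in>trace_class. trace_norm (\<Phi> \<rho>) \<le> C * trace_norm \<rho>)"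

definition completely_positive :: "('i mat \<Rightarrow> 'i mat) \<Rightarrow> bool" where
  "completely_positive \<Phi> \<longleftrightarrow>
     (\<forall>n \<rho>. block_pos n \<rho> \<longrightarrow> block_pos n (\<lambda>a b. \<Phi> (\<rho> a b)))"

definition trace_preserving_qds :: "(real \<Rightarrow> 'i mat \<Rightarrow> 'i mat) \<Rightarrow> bool" where
  "trace_preserving_qds T \<longleftrightarrow>
     (\<forall>t\<ge>0. tc_bounded_linear (T t) \<and> completely_positive (T t) \<and>
             (\<forall>\<rho>\<in>trace_class. mtrace (T t \<rho>) = mtrace \<rho>)) \<and>
     (\<forall>\<rho>\<in>trace_class. T 0 \<rho> = \<rho>) \<and>
     (\<forall>s\<ge>0. \<forall>t\<ge>0. \<forall>\<rho>\<in>trace_class. T (s + t) \<rho> = T s (T t \<rho>)) \<and>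
     (\<forall>\<rho>\<in>trace_class. ((\<lambda>t. trace_norm (msub (T t \<rho>) \<rho>)) \<longlongrightarrow> 0) (at_right 0))"

definition qds_generator ::
  "(real \<Rightarrow> 'i mat \<Rightarrow> 'i mat) \<Rightarrow> 'i mat set \<Rightarrow> ('i mat \<Rightarrow> 'i mat) \<Rightarrow> bool" where
  "qds_generator T D L \<longleftrightarrow>
     D = {\<rho>\<in>trace_class. \<exists>\<sigma>\<in>trace_class.
            ((\<lambda>t. trace_norm (msub (mscale (1 / complex_of_real t) (msub (T t \<rho>) \<rho>)) \<sigma>))
               \<longlongrightarrow> 0) (at_right 0)} \<and>
     (\<forall>\<rho>\<in>D. L \<rho> \<in> trace_class \<and>
        ((\<lambda>t. trace_norm (msub (mscale (1 / complex_of_real t) (msub (T t \<rho>) \<rho>)) (L \<rho>)))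
           \<longlongrightarrow> 0) (at_right 0))"

definition D0 :: "'i vec set \<Rightarrow> 'i mat set" where
  "D0 DM = {msum (\<lambda>k. rank1 (a k) (b k)) n | n a b. \<forall>k<n. a k \<in> DM \<and> b k \<in> DM}"

text \<open>Generalized standard form of the generator L (domain D) with operators
  M (domain DM) and L_k (k ranging over nat; finitely many operators are covered by
  taking the remaining ones to be zero).\<close>
definition gen_standard_form ::
  "'i mat set \<Rightarrow> ('i mat \<Rightarrow> 'i mat) \<Rightarrow> 'i vec set \<Rightarrow> ('i vec \<Rightarrow> 'i vec) \<Rightarrow>
   (nat \<Rightarrow> 'i vec \<Rightarrow> 'i vec) \<Rightarrow> bool" where
  "gen_standard_form D L DM M Lk \<longleftrightarrow>
     \<comment> \<open>M is a densely defined closed linear operator generating a semigroup on H\<close>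
     linear_on_l2 DM M \<and>
     (\<forall>x\<in>l2. \<forall>\<epsilon>>0. \<exists>y\<in>DM. l2_norm (vsub x y) < \<epsilon>) \<and>
     (\<forall>xs x y. (\<forall>n. xs n \<in> DM) \<and> x \<in> l2 \<and> y \<in> l2 \<and>
        (\<lambda>n. l2_norm (vsub (xs n) x)) \<longlonglongrightarrow> 0 \<and>
        (\<lambda>n. l2_norm (vsub (M (xs n)) y)) \<longlonglongrightarrow> 0 \<longrightarrow> x \<in> DM \<and> M x = y) \<and>
     (\<exists>S. c0_semigroup_l2 S \<and> semigroup_generator_l2 S DM (\<lambda>x. vscale (-1) (M x))) \<and>
     \<comment> \<open>the L_k are linear and relatively bounded with respect to M\<close>
     (\<forall>k. linear_on_l2 DM (Lk k) \<and>
          (\<exists>a b. \<forall>x\<in>DM. l2_norm (Lk k x) \<le> a * l2_norm x + b * l2_norm (M x))) \<and>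
     \<comment> \<open>action of L on |phi><psi|; the series converges in trace norm\<close>
     (\<forall>\<phi>\<in>DM. \<forall>\<psi>\<in>DM. rank1 \<phi> \<psi> \<in> D \<and>
        (\<lambda>n. trace_norm (msub (msum (\<lambda>k. rank1 (Lk k \<phi>) (Lk k \<psi>)) n)
                (madd (madd (L (rank1 \<phi> \<psi>)) (rank1 (M \<phi>) \<psi>)) (rank1 \<phi> (M \<psi>)))))
          \<longlonglongrightarrow> 0) \<and>
     \<comment> \<open>D(L) is the graph norm closure of D_0 (D_0 is a subset of D by the above)\<close>
     (\<forall>\<rho>\<in>D. \<exists>s. (\<forall>n. s n \<in> D0 DM) \<and>
        (\<lambda>n. trace_norm (msub (s n) \<rho>) + trace_norm (msub (L (s n)) (L \<rho>))) \<longlonglongrightarrow> 0) \<and>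
     \<comment> \<open>normalisation\<close>
     (\<forall>\<phi>\<in>DM. (\<lambda>k. complex_of_real ((l2_norm (Lk k \<phi>))\<^sup>2))
                 sums (l2_inner \<phi> (M \<phi>) + l2_inner (M \<phi>) \<phi>))"

definition Mcal :: "('i vec \<Rightarrow> 'i vec) \<Rightarrow> 'i vec \<Rightarrow> 'i vec \<Rightarrow> 'i mat" where
  "Mcal M \<phi> \<psi> = madd (rank1 (M \<phi>) \<psi>) (rank1 \<phi> (M \<psi>))"

definition Lplus :: "('i mat \<Rightarrow> 'i mat) \<Rightarrow> ('i vec \<Rightarrow> 'i vec) \<Rightarrow> 'i vec \<Rightarrow> 'i vec \<Rightarrow> 'i mat" where
  "Lplus L M \<phi> \<psi> = madd (L (rank1 \<phi> \<psi>)) (Mcal M \<phi> \<psi>)"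

end

theory Submission
  imports Defs
begin

text \<open>Both \<open>Mcal\<close> and \<open>L\<^sub>+\<close> are sesquilinear in \<open>(\<phi>, \<psi>)\<close>, so each difference splits into
  rank one operators \<open>|u\<rangle>\<langle>v|\<close> whose trace norm is at most \<open>\<parallel>u\<parallel> \<parallel>v\<parallel>\<close>. For \<open>Mcal\<close> this gives the
  bound at once. \<open>L\<^sub>+(|\<phi>\<rangle>\<langle>\<psi>|)\<close> is the trace norm limit of \<open>\<Sum>\<^bsub>k<n\<^esub> |L\<^sub>k \<phi>\<rangle>\<langle>L\<^sub>k \<psi>|\<close>; the
  normalisation \<open>\<Sum>\<^sub>k \<parallel>L\<^sub>k x\<parallel>\<^sup>2 = 2 Re \<langle>x, M x\<rangle> \<le> 2 \<parallel>x\<parallel> \<parallel>M x\<parallel>\<close> together with Cauchy-Schwarz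
  bounds every partial sum of the difference by the same quantity, and the bound passes to
  the limit.\<close>

section \<open>The Hilbert space l2\<close>

lemma l2_norm_nonneg: "0 \<le> l2_norm x"
  unfolding l2_norm_def by (simp add: infsum_nonneg)

lemma zero_in_l2: "(\<lambda>i. 0) \<in> l2"
  and l2_norm_zero: "l2_norm (\<lambda>i. 0) = 0"
  unfolding l2_def l2_norm_def by auto

lemma vscale_in_l2: "x \<in> l2 \<Longrightarrow> vscale c x \<in> l2"
  unfolding l2_def vscale_def
  by (auto simp: norm_mult power_mult_distrib intro: summable_on_cmult_right)

lemma l2_norm_vscale: "l2_norm (vscale c x) = cmod c * l2_norm x"
  unfolding l2_norm_def vscale_def
  by (simp add: norm_mult power_mult_distrib infsum_cmult_right' real_sqrt_mult)

lemma vsub_in_l2: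
  assumes "x \<in> l2" "y \<in> l2"
  shows "vsub x y \<in> l2"
proof -
  have bound: "(\<lambda>i. 2 * (cmod (x i))\<^sup>2 + 2 * (cmod (y i))\<^sup>2) summable_on UNIV"
    using assms unfolding l2_def by (intro summable_on_add summable_on_cmult_right) auto
  have "(cmod (x i - y i))\<^sup>2 \<le> 2 * (cmod (x i))\<^sup>2 + 2 * (cmod (y i))\<^sup>2" for i
  proof -
    have "(cmod (x i - y i))\<^sup>2 \<le> (cmod (x i) + cmod (y i))\<^sup>2"
      by (intro power_mono norm_triangle_ineq4) auto
    also have "\<dots> \<le> 2 * (cmod (x i))\<^sup>2 + 2 * (cmod (y i))\<^sup>2"
      using sum_squares_bound[of "cmod (x i)" "cmod (y i)"] by (simp add: power2_sum)
    finally show ?thesis .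
  qed
  then have "(\<lambda>i. (cmod (x i - y i))\<^sup>2) summable_on UNIV"
    by (intro summable_on_comparison_test[OF bound]) auto
  then show ?thesis unfolding l2_def vsub_def by simp
qed

lemma L2_set_le_l2_norm:
  assumes "x \<in> l2" "finite F"
  shows "L2_set (\<lambda>i. cmod (x i)) F \<le> l2_norm x"
  using assms unfolding l2_def l2_norm_def L2_set_def
  by (intro real_sqrt_le_mono finite_sum_le_infsum) auto

lemma l2_norm_le_of_L2_set_le:
  assumes "x \<in> l2" "0 \<le> B" "\<And>F. finite F \<Longrightarrow> L2_set (\<lambda>i. cmod (x i)) F \<le> B"
  shows "l2_norm x \<le> B"
proof -
  have "(\<Sum>\<^sub>\<infinity>i. (cmod (x i))\<^sup>2) \<le> B\<^sup>2"
  proof (rule infsum_le_finite_sums)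
    show "(\<lambda>i. (cmod (x i))\<^sup>2) summable_on UNIV"
      using assms(1) unfolding l2_def by simp
    fix F :: "'a set" assume "finite F"
    show "(\<Sum>i\<in>F. (cmod (x i))\<^sup>2) \<le> B\<^sup>2"
      using assms(3)[OF \<open>finite F\<close>] unfolding L2_set_def by (rule sqrt_le_D)
  qed
  then show ?thesis
    unfolding l2_norm_def using assms(2) by (intro real_le_lsqrt)
qed

lemma l2_norm_vsub_le:
  assumes "x \<in> l2" "y \<in> l2"
  shows "l2_norm (vsub x y) \<le> l2_norm x + l2_norm y"
proof (rule l2_norm_le_of_L2_set_le[OF vsub_in_l2[OF assms]])
  show "0 \<le> l2_norm x + l2_norm y"
    by (simp add: l2_norm_nonneg add_nonneg_nonneg)
  fix F :: "'a set" assume F: "finite F"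
  have "L2_set (\<lambda>i. cmod (vsub x y i)) F \<le> L2_set (\<lambda>i. cmod (x i) + cmod (y i)) F"
    unfolding L2_set_def vsub_def
    by (intro real_sqrt_le_mono sum_mono power_mono norm_triangle_ineq4) auto
  also have "\<dots> \<le> L2_set (\<lambda>i. cmod (x i)) F + L2_set (\<lambda>i. cmod (y i)) F"
    by (rule L2_set_triangle_ineq)
  also have "\<dots> \<le> l2_norm x + l2_norm y"
    using L2_set_le_l2_norm[OF assms(1) F] L2_set_le_l2_norm[OF assms(2) F] by simp
  finally show "L2_set (\<lambda>i. cmod (vsub x y i)) F \<le> l2_norm x + l2_norm y" .
qed

lemma l2_norm_le_add_if_vsub_le:
  assumes "x \<in> l2" "y \<in> l2" "l2_norm (vsub x y) \<le> \<epsilon>"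
  shows "l2_norm y \<le> l2_norm x + \<epsilon>"
proof -
  have "y = vsub x (vsub x y)"
    unfolding vsub_def by simp
  then have "l2_norm y \<le> l2_norm x + l2_norm (vsub x y)"
    using l2_norm_vsub_le[OF assms(1) vsub_in_l2[OF assms(1,2)]] by metis
  with assms(3) show ?thesis
    by linarith
qed

lemma l2_inner_Cauchy_Schwarz:
  assumes "x \<in> l2" "y \<in> l2"
  shows "cmod (l2_inner x y) \<le> l2_norm x * l2_norm y"
proof -
  have "norm (norm (cnj (x i) * y i)) \<le> (cmod (x i))\<^sup>2 + (cmod (y i))\<^sup>2" for i
  proof -
    have prod_nonneg: "0 \<le> cmod (x i) * cmod (y i)"
      by simp
    have "0 \<le> (cmod (x i) - cmod (y i))\<^sup>2"
      by simp
    then show ?thesis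
      by (simp add: norm_mult power2_eq_square algebra_simps) (use prod_nonneg in linarith)
  qed
  moreover have dominant: "(\<lambda>i. (cmod (x i))\<^sup>2 + (cmod (y i))\<^sup>2) summable_on UNIV"
    using assms unfolding l2_def by (intro summable_on_add) auto
  ultimately have abs_summable: "(\<lambda>i. norm (cnj (x i) * y i)) summable_on UNIV"
    by (intro summable_on_comparison_test[OF dominant]) auto
  have "cmod (l2_inner x y) \<le> (\<Sum>\<^sub>\<infinity>i. norm (cnj (x i) * y i))"
    unfolding l2_inner_def by (rule norm_infsum_bound[OF abs_summable])
  also have "\<dots> \<le> l2_norm x * l2_norm y"
  proof (rule infsum_le_finite_sums[OF abs_summable])
    fix F :: "'a set" assume F: "finite F"
    have "(\<Sum>i\<in>F. norm (cnj (x i) * y i)) = (\<Sum>i\<in>F. \<bar>cmod (x i)\<bar> * \<bar>cmod (y i)\<bar>)"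
      by (simp add: norm_mult)
    also have "\<dots> \<le> L2_set (\<lambda>i. cmod (x i)) F * L2_set (\<lambda>i. cmod (y i)) F"
      by (rule L2_set_mult_ineq)
    also have "\<dots> \<le> l2_norm x * l2_norm y"
      by (intro mult_mono L2_set_le_l2_norm assms F l2_norm_nonneg L2_set_nonneg)
    finally show "(\<Sum>i\<in>F. norm (cnj (x i) * y i)) \<le> l2_norm x * l2_norm y" .
  qed
  finally show ?thesis .
qed

lemma linear_on_l2_vsub:
  assumes "linear_on_l2 D A" "x \<in> D" "y \<in> D"
  shows "vsub x y \<in> D" "A (vsub x y) = vsub (A x) (A y)"
proof -
  have "vsub x y = vadd x (vscale (-1) y)" "vsub (A x) (A y) = vadd (A x) (vscale (-1) (A y))"
    unfolding vsub_def vadd_def vscale_def by auto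
  then show "vsub x y \<in> D" "A (vsub x y) = vsub (A x) (A y)"
    using assms unfolding linear_on_l2_def by auto
qed

lemma linear_on_l2_in_l2:
  assumes "linear_on_l2 D A" "x \<in> D"
  shows "x \<in> l2" "A x \<in> l2"
  using assms unfolding linear_on_l2_def by blast+

section \<open>Nuclear representations and the trace norm\<close>

definition has_nuclear_sum :: "'i mat \<Rightarrow> real \<Rightarrow> bool" where
  "has_nuclear_sum A s \<longleftrightarrow>
     (\<exists>a b. nuclear_rep A a b \<and> (\<lambda>n. l2_norm (a n) * l2_norm (b n)) sums s)"

lemma nuclear_weights_bdd_below:
  "bdd_below {(\<Sum>n. l2_norm (a n) * l2_norm (b n)) | a b. nuclear_rep A a b}"
  unfolding bdd_below_def nuclear_rep_def
  by (rule exI[of _ 0]) (auto intro!: suminf_nonneg mult_nonneg_nonneg l2_norm_nonneg)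

lemma trace_norm_le_nuclear_sum: "has_nuclear_sum A s \<Longrightarrow> trace_norm A \<le> s"
  unfolding has_nuclear_sum_def trace_norm_def
  by (auto intro!: cInf_lower[OF _ nuclear_weights_bdd_below] dest: sums_unique)

lemma trace_class_iff_has_nuclear_sum: "A \<in> trace_class \<longleftrightarrow> (\<exists>s. has_nuclear_sum A s)"
  unfolding has_nuclear_sum_def trace_class_def nuclear_rep_def by (auto dest: summable_sums)

lemma has_nuclear_sum_near_trace_norm:
  assumes "A \<in> trace_class" "0 < d"
  obtains s where "has_nuclear_sum A s" "s < trace_norm A + d"
proof -
  let ?W = "{(\<Sum>n. l2_norm (a n) * l2_norm (b n)) | a b. nuclear_rep A a b}"
  have "?W \<noteq> {}"
    using assms(1) unfolding trace_class_def by auto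
  moreover have "Inf ?W < trace_norm A + d"
    using assms(2) unfolding trace_norm_def by simp
  ultimately obtain a b where "nuclear_rep A a b"
      "(\<Sum>n. l2_norm (a n) * l2_norm (b n)) < trace_norm A + d"
    using cInf_less_iff[OF _ nuclear_weights_bdd_below] by blast
  then show ?thesis
    using that unfolding has_nuclear_sum_def nuclear_rep_def by (blast dest: summable_sums)
qed

lemma has_nuclear_sum_zero: "has_nuclear_sum (\<lambda>i j. 0) 0"
  unfolding has_nuclear_sum_def nuclear_rep_def
  by (intro exI[of _ "\<lambda>n i. 0"]) (auto simp: zero_in_l2 l2_norm_zero)

lemma has_nuclear_sum_rank1:
  assumes "x \<in> l2" "y \<in> l2"
  shows "has_nuclear_sum (rank1 x y) (l2_norm x * l2_norm y)"
proof -
  define a where "a = (\<lambda>n::nat. if n = 0 then x else (\<lambda>i. 0))"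
  define b where "b = (\<lambda>n::nat. if n = 0 then y else (\<lambda>i. 0))"
  have weights: "(\<lambda>n. l2_norm (a n) * l2_norm (b n)) = (\<lambda>n. if n = 0 then l2_norm x * l2_norm y else 0)"
    unfolding a_def b_def by (auto simp: l2_norm_zero)
  have entries: "(\<lambda>n. a n i * cnj (b n j)) = (\<lambda>n. if n = 0 then x i * cnj (y j) else 0)" for i j
    unfolding a_def b_def by auto
  have single: "(\<lambda>n::nat. if n = 0 then z else 0) sums z" for z :: "'b::real_normed_vector"
    using sums_single[of 0 "\<lambda>_. z"] by simp
  have "nuclear_rep (rank1 x y) a b"
    unfolding nuclear_rep_def weights entries rank1_def
    using assms single by (auto simp: a_def b_def zero_in_l2 sums_summable)
  then show ?thesis
    unfolding has_nuclear_sum_def using weights single by (intro exI[of _ a] exI[of _ b]) simp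
qed

lemma sums_interleave_complex:
  fixes f g :: "nat \<Rightarrow> complex"
  assumes "f sums x" "g sums y"
  shows "(\<lambda>n. if even n then f (n div 2) else g ((n - 1) div 2)) sums (x + y)"
proof -
  have Re: "(\<lambda>n. Re (if even n then f (n div 2) else g ((n - 1) div 2))) =
      (\<lambda>n. if even n then Re (f (n div 2)) else Re (g ((n - 1) div 2)))"
    and Im: "(\<lambda>n. Im (if even n then f (n div 2) else g ((n - 1) div 2))) =
      (\<lambda>n. if even n then Im (f (n div 2)) else Im (g ((n - 1) div 2)))"
    by auto
  have "(\<lambda>n. if even n then Re (f (n div 2)) else Re (g ((n - 1) div 2))) sums (Re x + Re y)"
    using sums_if[of "\<lambda>n. Re (g n)" "Re y" "\<lambda>n. Re (f n)" "Re x"] assms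
    by (simp add: sums_complex_iff add.commute)
  moreover have "(\<lambda>n. if even n then Im (f (n div 2)) else Im (g ((n - 1) div 2))) sums (Im x + Im y)"
    using sums_if[of "\<lambda>n. Im (g n)" "Im y" "\<lambda>n. Im (f n)" "Im x"] assms
    by (simp add: sums_complex_iff add.commute)
  ultimately show ?thesis
    unfolding sums_complex_iff Re Im by simp
qed

lemma has_nuclear_sum_madd:
  assumes "has_nuclear_sum A s" "has_nuclear_sum B t"
  shows "has_nuclear_sum (madd A B) (s + t)"
proof -
  obtain a b where ab: "nuclear_rep A a b" "(\<lambda>n. l2_norm (a n) * l2_norm (b n)) sums s"
    using assms(1) unfolding has_nuclear_sum_def by blast
  obtain c d where cd: "nuclear_rep B c d" "(\<lambda>n. l2_norm (c n) * l2_norm (d n)) sums t"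
    using assms(2) unfolding has_nuclear_sum_def by blast
  define interleave :: "(nat \<Rightarrow> 'a vec) \<Rightarrow> (nat \<Rightarrow> 'a vec) \<Rightarrow> nat \<Rightarrow> 'a vec" where
    "interleave u v n = (if even n then u (n div 2) else v ((n - 1) div 2))" for u v n
  have "(\<lambda>n. l2_norm (interleave a c n) * l2_norm (interleave b d n)) =
      (\<lambda>n. if even n then l2_norm (a (n div 2)) * l2_norm (b (n div 2))
           else l2_norm (c ((n - 1) div 2)) * l2_norm (d ((n - 1) div 2)))"
    unfolding interleave_def by auto
  then have weights: "(\<lambda>n. l2_norm (interleave a c n) * l2_norm (interleave b d n)) sums (s + t)"
    using sums_if[OF cd(2) ab(2)] by (simp add: add.commute)
  have "nuclear_rep (madd A B) (interleave a c) (interleave b d)"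
    unfolding nuclear_rep_def
  proof (intro conjI allI)
    show "interleave a c n \<in> l2" "interleave b d n \<in> l2" for n
      using ab(1) cd(1) unfolding interleave_def nuclear_rep_def by auto
    show "summable (\<lambda>n. l2_norm (interleave a c n) * l2_norm (interleave b d n))"
      using weights by (rule sums_summable)
    fix i j
    have "(\<lambda>n. a n i * cnj (b n j)) sums A i j" "(\<lambda>n. c n i * cnj (d n j)) sums B i j"
      using ab(1) cd(1) unfolding nuclear_rep_def by auto
    note entries = sums_interleave_complex[OF this]
    have "(\<lambda>n. interleave a c n i * cnj (interleave b d n j)) =
        (\<lambda>n. if even n then a (n div 2) i * cnj (b (n div 2) j)
             else c ((n - 1) div 2) i * cnj (d ((n - 1) div 2) j))"
      unfolding interleave_def by auto
    then show "(\<lambda>n. interleave a c n i * cnj (interleave b d n j)) sums madd A B i j"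
      unfolding madd_def using entries by simp
  qed
  with weights show ?thesis
    unfolding has_nuclear_sum_def by blast
qed

lemma nuclear_rep_mscale:
  assumes "nuclear_rep A a b"
  shows "nuclear_rep (mscale c A) (\<lambda>n. vscale c (a n)) b"
proof -
  have "(\<lambda>n. vscale c (a n) i * cnj (b n j)) sums mscale c A i j" for i j
    using sums_mult[of "\<lambda>n. a n i * cnj (b n j)" "A i j" c] assms
    unfolding nuclear_rep_def vscale_def mscale_def by (simp add: mult.assoc)
  moreover have "summable (\<lambda>n. l2_norm (vscale c (a n)) * l2_norm (b n))"
    using assms summable_mult[of "\<lambda>n. l2_norm (a n) * l2_norm (b n)" "cmod c"]
    unfolding nuclear_rep_def by (simp add: l2_norm_vscale mult.assoc)
  ultimately show ?thesis
    using assms unfolding nuclear_rep_def by (simp add: vscale_in_l2)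
qed

lemma has_nuclear_sum_mscale:
  assumes "has_nuclear_sum A s"
  shows "has_nuclear_sum (mscale c A) (cmod c * s)"
proof -
  obtain a b where ab: "nuclear_rep A a b" "(\<lambda>n. l2_norm (a n) * l2_norm (b n)) sums s"
    using assms unfolding has_nuclear_sum_def by blast
  have "(\<lambda>n. l2_norm (vscale c (a n)) * l2_norm (b n)) sums (cmod c * s)"
    using sums_mult[OF ab(2), of "cmod c"] by (simp add: l2_norm_vscale mult.assoc)
  then show ?thesis
    using nuclear_rep_mscale[OF ab(1)] unfolding has_nuclear_sum_def by blast
qed

lemma has_nuclear_sum_msum:
  assumes "\<And>k. k < n \<Longrightarrow> has_nuclear_sum (A k) (s k)"
  shows "has_nuclear_sum (msum A n) (\<Sum>k<n. s k)"
  using assms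
proof (induction n)
  case 0
  then show ?case
    using has_nuclear_sum_zero by (simp add: msum_def)
next
  case (Suc n)
  have "msum A (Suc n) = madd (msum A n) (A n)"
    unfolding msum_def madd_def by simp
  then show ?case
    using has_nuclear_sum_madd[OF Suc.IH Suc.prems[of n]] Suc.prems by simp
qed

lemma has_nuclear_sum_rank1_diff:
  assumes "x \<in> l2" "y \<in> l2" "x' \<in> l2" "y' \<in> l2"
  shows "has_nuclear_sum (msub (rank1 x y) (rank1 x' y'))
           (l2_norm (vsub x x') * l2_norm y + l2_norm x' * l2_norm (vsub y y'))"
proof -
  have "msub (rank1 x y) (rank1 x' y') = madd (rank1 (vsub x x') y) (rank1 x' (vsub y y'))"
    by (auto simp: fun_eq_iff msub_def madd_def rank1_def vsub_def algebra_simps)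
  then show ?thesis
    using assms by (simp add: has_nuclear_sum_madd has_nuclear_sum_rank1 vsub_in_l2)
qed

lemma trace_class_rank1: "x \<in> l2 \<Longrightarrow> y \<in> l2 \<Longrightarrow> rank1 x y \<in> trace_class"
  using has_nuclear_sum_rank1 trace_class_iff_has_nuclear_sum by blast

lemma trace_class_madd: "A \<in> trace_class \<Longrightarrow> B \<in> trace_class \<Longrightarrow> madd A B \<in> trace_class"
  unfolding trace_class_iff_has_nuclear_sum by (blast intro: has_nuclear_sum_madd)

lemma msub_eq_madd_mscale: "msub A B = madd A (mscale (-1) B)"
  unfolding msub_def madd_def mscale_def by simp

lemma trace_class_msub: "A \<in> trace_class \<Longrightarrow> B \<in> trace_class \<Longrightarrow> msub A B \<in> trace_class"
  unfolding msub_eq_madd_mscale trace_class_iff_has_nuclear_sum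
  by (blast intro: has_nuclear_sum_madd has_nuclear_sum_mscale)

lemma trace_class_msum:
  assumes "\<And>k. k < n \<Longrightarrow> A k \<in> trace_class"
  shows "msum A n \<in> trace_class"
proof -
  have "\<forall>k\<in>{..<n}. \<exists>s. has_nuclear_sum (A k) s"
    using assms trace_class_iff_has_nuclear_sum by auto
  then obtain s where "\<forall>k\<in>{..<n}. has_nuclear_sum (A k) (s k)"
    by (auto dest!: bchoice)
  then have "has_nuclear_sum (msum A n) (\<Sum>k<n. s k)"
    by (intro has_nuclear_sum_msum) auto
  then show ?thesis
    unfolding trace_class_iff_has_nuclear_sum by blast
qed

lemma trace_norm_madd_le:
  assumes "A \<in> trace_class" "B \<in> trace_class"
  shows "trace_norm (madd A B) \<le> trace_norm A + trace_norm B"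
proof (rule field_le_epsilon)
  fix d :: real assume "0 < d"
  then have "0 < d / 2"
    by simp
  obtain s where s: "has_nuclear_sum A s" "s < trace_norm A + d / 2"
    by (rule has_nuclear_sum_near_trace_norm[OF assms(1) \<open>0 < d / 2\<close>])
  obtain t where t: "has_nuclear_sum B t" "t < trace_norm B + d / 2"
    by (rule has_nuclear_sum_near_trace_norm[OF assms(2) \<open>0 < d / 2\<close>])
  have "trace_norm (madd A B) \<le> s + t"
    by (rule trace_norm_le_nuclear_sum[OF has_nuclear_sum_madd[OF s(1) t(1)]])
  with s(2) t(2) show "trace_norm (madd A B) \<le> trace_norm A + trace_norm B + d"
    by linarith
qed

lemma trace_norm_msub_triangle:
  assumes "A \<in> trace_class" "B \<in> trace_class" "C \<in> trace_class"
  shows "trace_norm (msub A C) \<le> trace_norm (msub A B) + trace_norm (msub B C)"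
proof -
  have "msub A C = madd (msub A B) (msub B C)"
    unfolding msub_def madd_def by simp
  then show ?thesis
    using assms by (simp add: trace_norm_madd_le trace_class_msub)
qed

lemma trace_norm_msub_commute: "trace_norm (msub A B) = trace_norm (msub B A)"
proof -
  let ?W = "\<lambda>X. {(\<Sum>n. l2_norm (a n) * l2_norm (b n)) | a b. nuclear_rep X a b}"
  have swap: "?W (msub A B) \<subseteq> ?W (msub B A)" for A B :: "'a mat"
  proof
    fix w assume "w \<in> ?W (msub A B)"
    then obtain a b where rep: "nuclear_rep (msub A B) a b"
        and w: "w = (\<Sum>n. l2_norm (a n) * l2_norm (b n))"
      by blast
    have "mscale (-1) (msub A B) = msub B A"
      unfolding mscale_def msub_def by simp
    then have "nuclear_rep (msub B A) (\<lambda>n. vscale (-1) (a n)) b"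
      using nuclear_rep_mscale[OF rep, of "-1"] by simp
    moreover have "w = (\<Sum>n. l2_norm (vscale (-1) (a n)) * l2_norm (b n))"
      unfolding w by (simp add: l2_norm_vscale)
    ultimately show "w \<in> ?W (msub B A)"
      by (intro CollectI exI[of _ "\<lambda>n. vscale (-1) (a n)"] exI[of _ b]) simp
  qed
  have "?W (msub A B) = ?W (msub B A)"
    using swap[of A B] swap[of B A] by blast
  then show ?thesis
    unfolding trace_norm_def by simp
qed

text \<open>The trace class hypotheses are essential: off \<open>trace_class\<close> the trace norm is the
  infimum of the empty set, an unspecified real number.\<close>
lemma trace_norm_msub_le_of_approx:
  assumes "A \<in> trace_class" "B \<in> trace_class"
    and "\<And>n. S n \<in> trace_class" "\<And>n. R n \<in> trace_class"
    and "(\<lambda>n. trace_norm (msub (S n) A)) \<longlonglongrightarrow> 0" "(\<lambda>n. trace_norm (msub (R n) B)) \<longlonglongrightarrow> 0"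
    and "\<And>n. trace_norm (msub (S n) (R n)) \<le> c"
  shows "trace_norm (msub A B) \<le> c"
proof -
  have bound: "trace_norm (msub A B) \<le> trace_norm (msub (S n) A) + c + trace_norm (msub (R n) B)" for n
  proof -
    have "trace_norm (msub A B) \<le> trace_norm (msub A (S n)) + trace_norm (msub (S n) B)"
      using assms by (intro trace_norm_msub_triangle)
    also have "\<dots> \<le> trace_norm (msub A (S n)) + (trace_norm (msub (S n) (R n)) + trace_norm (msub (R n) B))"
      using assms by (intro add_left_mono trace_norm_msub_triangle)
    finally show ?thesis
      using assms(7)[of n] by (simp add: trace_norm_msub_commute[of A])
  qed
  have "(\<lambda>n. trace_norm (msub (S n) A) + c + trace_norm (msub (R n) B)) \<longlonglongrightarrow> 0 + c + 0"
    using assms(5,6) by (intro tendsto_add tendsto_const)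
  then have "trace_norm (msub A B) \<le> 0 + c + 0"
    by (rule LIMSEQ_le_const) (use bound in blast)
  then show ?thesis
    by simp
qed

section \<open>Estimates from the generalized standard form\<close>

lemma sum_mult_le_of_sum_squares_le:
  fixes f g :: "'k \<Rightarrow> real"
  assumes "\<And>k. 0 \<le> f k" "\<And>k. 0 \<le> g k"
    and "(\<Sum>k\<in>K. (f k)\<^sup>2) \<le> 2 * \<epsilon>\<^sup>2" "(\<Sum>k\<in>K. (g k)\<^sup>2) \<le> 2 * (a * b)"
    and "0 \<le> a" "0 \<le> b" "0 \<le> \<epsilon>"
  shows "(\<Sum>k\<in>K. f k * g k) \<le> \<epsilon> * (a + b)"
proof -
  have "(\<Sum>k\<in>K. f k * g k) \<le> L2_set f K * L2_set g K"
    using L2_set_mult_ineq[of f g K] assms(1,2) by simp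
  also have "\<dots> = sqrt ((\<Sum>k\<in>K. (f k)\<^sup>2) * (\<Sum>k\<in>K. (g k)\<^sup>2))"
    unfolding L2_set_def by (simp add: real_sqrt_mult)
  also have "\<dots> \<le> sqrt ((2 * \<epsilon>\<^sup>2) * (2 * (a * b)))"
    using assms(3,4) by (intro real_sqrt_le_mono mult_mono) (auto intro: sum_nonneg)
  also have "\<dots> \<le> \<epsilon> * (a + b)"
  proof (rule real_le_lsqrt)
    show "0 \<le> \<epsilon> * (a + b)"
      using assms(5-7) by simp
    have "0 \<le> \<epsilon>\<^sup>2 * (a - b)\<^sup>2"
      by simp
    then show "(2 * \<epsilon>\<^sup>2) * (2 * (a * b)) \<le> (\<epsilon> * (a + b))\<^sup>2"
      by (simp add: power2_eq_square algebra_simps)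
  qed
  finally show ?thesis .
qed

lemma sum_norm_sq_le_of_sums_inner:
  assumes "x \<in> l2" "y \<in> l2" "finite K"
    and "(\<lambda>k. complex_of_real ((l2_norm (v k))\<^sup>2)) sums (l2_inner x y + l2_inner y x)"
  shows "(\<Sum>k\<in>K. (l2_norm (v k))\<^sup>2) \<le> 2 * (l2_norm x * l2_norm y)"
proof -
  let ?c = "l2_inner x y + l2_inner y x"
  have "(\<lambda>k. (l2_norm (v k))\<^sup>2) sums Re ?c"
    using assms(4) unfolding sums_complex_iff by simp
  then have "(\<Sum>k\<in>K. (l2_norm (v k))\<^sup>2) \<le> Re ?c"
    using sum_le_suminf[of "\<lambda>k. (l2_norm (v k))\<^sup>2" K] assms(3) by (auto simp: sums_iff)
  also have "\<dots> \<le> cmod (l2_inner x y) + cmod (l2_inner y x)"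
    using complex_Re_le_cmod norm_triangle_ineq order_trans by blast
  also have "\<dots> \<le> 2 * (l2_norm x * l2_norm y)"
    using l2_inner_Cauchy_Schwarz[OF assms(1,2)] l2_inner_Cauchy_Schwarz[OF assms(2,1)]
    by (simp add: mult.commute)
  finally show ?thesis .
qed

lemma gen_standard_formD:
  assumes "gen_standard_form D L DM M Lk"
  shows "linear_on_l2 DM M" "linear_on_l2 DM (Lk k)"
    and "\<phi> \<in> DM \<Longrightarrow> (\<lambda>k. complex_of_real ((l2_norm (Lk k \<phi>))\<^sup>2))
           sums (l2_inner \<phi> (M \<phi>) + l2_inner (M \<phi>) \<phi>)"
    and "\<phi> \<in> DM \<Longrightarrow> \<psi> \<in> DM \<Longrightarrow> rank1 \<phi> \<psi> \<in> D"
    and "\<phi> \<in> DM \<Longrightarrow> \<psi> \<in> DM \<Longrightarrow>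
           (\<lambda>n. trace_norm (msub (msum (\<lambda>k. rank1 (Lk k \<phi>) (Lk k \<psi>)) n) (Lplus L M \<phi> \<psi>))) \<longlonglongrightarrow> 0"
proof -
  note gsf = assms[unfolded gen_standard_form_def]
  show "linear_on_l2 DM M" "linear_on_l2 DM (Lk k)"
    using gsf by blast+
  show "\<phi> \<in> DM \<Longrightarrow> (\<lambda>k. complex_of_real ((l2_norm (Lk k \<phi>))\<^sup>2))
           sums (l2_inner \<phi> (M \<phi>) + l2_inner (M \<phi>) \<phi>)"
    using gsf by blast
  have action: "\<And>\<phi> \<psi>. \<phi> \<in> DM \<Longrightarrow> \<psi> \<in> DM \<Longrightarrow> rank1 \<phi> \<psi> \<in> D \<and>
      (\<lambda>n. trace_norm (msub (msum (\<lambda>k. rank1 (Lk k \<phi>) (Lk k \<psi>)) n)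
         (madd (madd (L (rank1 \<phi> \<psi>)) (rank1 (M \<phi>) \<psi>)) (rank1 \<phi> (M \<psi>))))) \<longlonglongrightarrow> 0"
    using gsf by blast
  have "Lplus L M \<phi> \<psi> = madd (madd (L (rank1 \<phi> \<psi>)) (rank1 (M \<phi>) \<psi>)) (rank1 \<phi> (M \<psi>))"
    unfolding Lplus_def Mcal_def madd_def by (simp add: add.assoc)
  then show "\<phi> \<in> DM \<Longrightarrow> \<psi> \<in> DM \<Longrightarrow> rank1 \<phi> \<psi> \<in> D"
    and "\<phi> \<in> DM \<Longrightarrow> \<psi> \<in> DM \<Longrightarrow>
      (\<lambda>n. trace_norm (msub (msum (\<lambda>k. rank1 (Lk k \<phi>) (Lk k \<psi>)) n) (Lplus L M \<phi> \<psi>))) \<longlonglongrightarrow> 0"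
    using action by simp_all
qed

lemma sum_norm_Lk_mult_le:
  assumes gsf: "gen_standard_form D L DM M Lk"
    and "x \<in> DM" "y \<in> DM" "0 \<le> \<epsilon>" "l2_norm x \<le> \<epsilon>" "l2_norm (M x) \<le> \<epsilon>"
  shows "(\<Sum>k<n. l2_norm (Lk k x) * l2_norm (Lk k y)) \<le> \<epsilon> * (l2_norm y + l2_norm (M y))"
proof (rule sum_mult_le_of_sum_squares_le)
  note M = gen_standard_formD(1)[OF gsf]
  note normalisation = gen_standard_formD(3)[OF gsf]
  have "(\<Sum>k<n. (l2_norm (Lk k x))\<^sup>2) \<le> 2 * (l2_norm x * l2_norm (M x))"
    using assms(2) by (intro sum_norm_sq_le_of_sums_inner normalisation linear_on_l2_in_l2[OF M]) auto
  also have "\<dots> \<le> 2 * \<epsilon>\<^sup>2"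
    using assms(4-6) by (auto simp: power2_eq_square intro!: mult_mono l2_norm_nonneg)
  finally show "(\<Sum>k<n. (l2_norm (Lk k x))\<^sup>2) \<le> 2 * \<epsilon>\<^sup>2" .
  show "(\<Sum>k<n. (l2_norm (Lk k y))\<^sup>2) \<le> 2 * (l2_norm y * l2_norm (M y))"
    using assms(3) by (intro sum_norm_sq_le_of_sums_inner normalisation linear_on_l2_in_l2[OF M]) auto
qed (use assms in \<open>auto simp: l2_norm_nonneg\<close>)

lemma trace_norm_Mcal_diff_le:
  assumes l2: "\<phi> \<in> l2" "\<psi> \<in> l2" "e \<in> l2" "f \<in> l2" "M \<phi> \<in> l2" "M \<psi> \<in> l2" "M e \<in> l2" "M f \<in> l2"
    and "0 \<le> \<epsilon>"
    and "l2_norm (vsub \<phi> e) \<le> \<epsilon>" "l2_norm (vsub (M \<phi>) (M e)) \<le> \<epsilon>"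
    and "l2_norm (vsub \<psi> f) \<le> \<epsilon>" "l2_norm (vsub (M \<psi>) (M f)) \<le> \<epsilon>"
  shows "trace_norm (msub (Mcal M \<phi> \<psi>) (Mcal M e f))
           \<le> \<epsilon> * (l2_norm \<phi> + l2_norm (M \<phi>) + l2_norm \<psi> + l2_norm (M \<psi>) + 2 * \<epsilon>)"
proof -
  have "msub (Mcal M \<phi> \<psi>) (Mcal M e f) =
      madd (msub (rank1 (M \<phi>) \<psi>) (rank1 (M e) f)) (msub (rank1 \<phi> (M \<psi>)) (rank1 e (M f)))"
    unfolding Mcal_def msub_def madd_def by (simp add: fun_eq_iff algebra_simps)
  then have "trace_norm (msub (Mcal M \<phi> \<psi>) (Mcal M e f))
      \<le> (l2_norm (vsub (M \<phi>) (M e)) * l2_norm \<psi> + l2_norm (M e) * l2_norm (vsub \<psi> f))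
        + (l2_norm (vsub \<phi> e) * l2_norm (M \<psi>) + l2_norm e * l2_norm (vsub (M \<psi>) (M f)))"
    using l2 by (auto intro!: trace_norm_le_nuclear_sum has_nuclear_sum_madd has_nuclear_sum_rank1_diff)
  also have "\<dots> \<le> (\<epsilon> * l2_norm \<psi> + (l2_norm (M \<phi>) + \<epsilon>) * \<epsilon>)
        + (\<epsilon> * l2_norm (M \<psi>) + (l2_norm \<phi> + \<epsilon>) * \<epsilon>)"
    using assms l2_norm_le_add_if_vsub_le
    by (intro add_mono mult_mono) (auto simp: l2_norm_nonneg add_nonneg_nonneg)
  finally show ?thesis
    by (simp add: algebra_simps)
qed

lemma trace_norm_partial_sums_diff_le:
  assumes gsf: "gen_standard_form D L DM M Lk"
    and DM: "\<phi> \<in> DM" "\<psi> \<in> DM" "e \<in> DM" "f \<in> DM"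
    and "0 \<le> \<epsilon>"
    and "l2_norm (vsub \<phi> e) \<le> \<epsilon>" "l2_norm (vsub (M \<phi>) (M e)) \<le> \<epsilon>"
    and "l2_norm (vsub \<psi> f) \<le> \<epsilon>" "l2_norm (vsub (M \<psi>) (M f)) \<le> \<epsilon>"
  shows "trace_norm (msub (msum (\<lambda>k. rank1 (Lk k \<phi>) (Lk k \<psi>)) n) (msum (\<lambda>k. rank1 (Lk k e) (Lk k f)) n))
           \<le> \<epsilon> * (l2_norm \<phi> + l2_norm (M \<phi>) + l2_norm \<psi> + l2_norm (M \<psi>) + 2 * \<epsilon>)"
proof -
  note M = gen_standard_formD(1)[OF gsf] and Lk = gen_standard_formD(2)[OF gsf]
  have diff_DM: "vsub \<phi> e \<in> DM" "vsub \<psi> f \<in> DM"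
    using linear_on_l2_vsub(1)[OF M] DM by auto
  have Lk_diff: "Lk k (vsub \<phi> e) = vsub (Lk k \<phi>) (Lk k e)" "Lk k (vsub \<psi> f) = vsub (Lk k \<psi>) (Lk k f)" for k
    using linear_on_l2_vsub(2)[OF Lk] DM by auto
  have "msub (msum (\<lambda>k. rank1 (Lk k \<phi>) (Lk k \<psi>)) n) (msum (\<lambda>k. rank1 (Lk k e) (Lk k f)) n)
      = msum (\<lambda>k. msub (rank1 (Lk k \<phi>) (Lk k \<psi>)) (rank1 (Lk k e) (Lk k f))) n"
    unfolding msub_def msum_def by (simp add: sum_subtractf)
  moreover have "has_nuclear_sum (msum (\<lambda>k. msub (rank1 (Lk k \<phi>) (Lk k \<psi>)) (rank1 (Lk k e) (Lk k f))) n)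
      (\<Sum>k<n. l2_norm (vsub (Lk k \<phi>) (Lk k e)) * l2_norm (Lk k \<psi>)
             + l2_norm (Lk k e) * l2_norm (vsub (Lk k \<psi>) (Lk k f)))"
    using DM linear_on_l2_in_l2[OF Lk] by (intro has_nuclear_sum_msum has_nuclear_sum_rank1_diff) auto
  ultimately have "trace_norm (msub (msum (\<lambda>k. rank1 (Lk k \<phi>) (Lk k \<psi>)) n) (msum (\<lambda>k. rank1 (Lk k e) (Lk k f)) n))
      \<le> (\<Sum>k<n. l2_norm (vsub (Lk k \<phi>) (Lk k e)) * l2_norm (Lk k \<psi>)
             + l2_norm (Lk k e) * l2_norm (vsub (Lk k \<psi>) (Lk k f)))"
    by (simp add: trace_norm_le_nuclear_sum)
  also have "\<dots> = (\<Sum>k<n. l2_norm (Lk k (vsub \<phi> e)) * l2_norm (Lk k \<psi>))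
        + (\<Sum>k<n. l2_norm (Lk k (vsub \<psi> f)) * l2_norm (Lk k e))"
    by (simp add: Lk_diff sum.distrib mult.commute)
  also have "\<dots> \<le> \<epsilon> * (l2_norm \<psi> + l2_norm (M \<psi>)) + \<epsilon> * (l2_norm e + l2_norm (M e))"
    using assms linear_on_l2_vsub(2)[OF M] diff_DM
    by (intro add_mono sum_norm_Lk_mult_le[OF gsf]) auto
  also have "\<dots> \<le> \<epsilon> * (l2_norm \<psi> + l2_norm (M \<psi>)) + \<epsilon> * ((l2_norm \<phi> + \<epsilon>) + (l2_norm (M \<phi>) + \<epsilon>))"
  proof -
    have "l2_norm e \<le> l2_norm \<phi> + \<epsilon>" "l2_norm (M e) \<le> l2_norm (M \<phi>) + \<epsilon>"
      using assms(7,8) linear_on_l2_in_l2[OF M DM(1)] linear_on_l2_in_l2[OF M DM(3)]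
      by (auto intro: l2_norm_le_add_if_vsub_le)
    then show ?thesis
      using assms(6) by (intro add_left_mono mult_left_mono add_mono) auto
  qed
  finally show ?thesis
    by (simp add: algebra_simps)
qed

lemma Lplus_trace_class:
  assumes "qds_generator T D L" "gen_standard_form D L DM M Lk" "\<phi> \<in> DM" "\<psi> \<in> DM"
  shows "Lplus L M \<phi> \<psi> \<in> trace_class"
proof -
  note M = gen_standard_formD(1)[OF assms(2)]
  have "L (rank1 \<phi> \<psi>) \<in> trace_class"
    using assms(1) gen_standard_formD(4)[OF assms(2-4)] unfolding qds_generator_def by blast
  then show ?thesis
    unfolding Lplus_def Mcal_def
    using assms(3,4) linear_on_l2_in_l2[OF M] by (auto intro!: trace_class_madd trace_class_rank1)
qed

theorem lemma3p8:
  fixes T :: "real \<Rightarrow> ('i::countable) mat \<Rightarrow> 'i mat"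
    and D :: "'i mat set" and L :: "'i mat \<Rightarrow> 'i mat"
    and DM :: "'i vec set" and M :: "'i vec \<Rightarrow> 'i vec"
    and Lk :: "nat \<Rightarrow> 'i vec \<Rightarrow> 'i vec"
    and \<phi> \<psi> e f :: "'i vec" and \<epsilon> :: real
  assumes "trace_preserving_qds T"
    and "qds_generator T D L"
    and "gen_standard_form D L DM M Lk"
    and "\<phi> \<in> DM" and "\<psi> \<in> DM" and "e \<in> DM" and "f \<in> DM"
    and "0 \<le> \<epsilon>"
    and "l2_norm (vsub \<phi> e) \<le> \<epsilon>" and "l2_norm (vsub (M \<phi>) (M e)) \<le> \<epsilon>"
    and "l2_norm (vsub \<psi> f) \<le> \<epsilon>" and "l2_norm (vsub (M \<psi>) (M f)) \<le> \<epsilon>"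
  shows "trace_norm (msub (Mcal M \<phi> \<psi>) (Mcal M e f))
           \<le> \<epsilon> * (l2_norm \<phi> + l2_norm (M \<phi>) + l2_norm \<psi> + l2_norm (M \<psi>) + 2 * \<epsilon>)
         \<and> trace_norm (msub (Lplus L M \<phi> \<psi>) (Lplus L M e f))
           \<le> \<epsilon> * (l2_norm \<phi> + l2_norm (M \<phi>) + l2_norm \<psi> + l2_norm (M \<psi>) + 2 * \<epsilon>)"
proof
  note M = gen_standard_formD(1)[OF assms(3)] and Lk = gen_standard_formD(2)[OF assms(3)]
  show "trace_norm (msub (Mcal M \<phi> \<psi>) (Mcal M e f))
      \<le> \<epsilon> * (l2_norm \<phi> + l2_norm (M \<phi>) + l2_norm \<psi> + l2_norm (M \<psi>) + 2 * \<epsilon>)"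
    using assms(4-12) linear_on_l2_in_l2[OF M] by (intro trace_norm_Mcal_diff_le) auto
  define partial_sums where
    "partial_sums x y n = msum (\<lambda>k. rank1 (Lk k x) (Lk k y)) n" for x y n
  have partial_sums_tc: "partial_sums x y n \<in> trace_class" if "x \<in> DM" "y \<in> DM" for x y n
    unfolding partial_sums_def using that linear_on_l2_in_l2[OF Lk]
    by (intro trace_class_msum trace_class_rank1) auto
  show "trace_norm (msub (Lplus L M \<phi> \<psi>) (Lplus L M e f))
      \<le> \<epsilon> * (l2_norm \<phi> + l2_norm (M \<phi>) + l2_norm \<psi> + l2_norm (M \<psi>) + 2 * \<epsilon>)"
  proof (rule trace_norm_msub_le_of_approx)
    show "Lplus L M \<phi> \<psi> \<in> trace_class" "Lplus L M e f \<in> trace_class"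
      using Lplus_trace_class[OF assms(2,3)] assms(4-7) by auto
    show "partial_sums \<phi> \<psi> n \<in> trace_class" "partial_sums e f n \<in> trace_class" for n
      using partial_sums_tc assms(4-7) by auto
    show "(\<lambda>n. trace_norm (msub (partial_sums \<phi> \<psi> n) (Lplus L M \<phi> \<psi>))) \<longlonglongrightarrow> 0"
      "(\<lambda>n. trace_norm (msub (partial_sums e f n) (Lplus L M e f))) \<longlonglongrightarrow> 0"
      unfolding partial_sums_def using gen_standard_formD(5)[OF assms(3)] assms(4-7) by auto
    show "trace_norm (msub (partial_sums \<phi> \<psi> n) (partial_sums e f n))
        \<le> \<epsilon> * (l2_norm \<phi> + l2_norm (M \<phi>) + l2_norm \<psi> + l2_norm (M \<psi>) + 2 * \<epsilon>)" for n
      unfolding partial_sums_def by (rule trace_norm_partial_sums_diff_le[OF assms(3-12)])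
  qed
qed

end
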